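(* Let $n$, $k$, $t$ be positive integers with $t\geq 2$, $k\geq t+2$ and $n\geq 2k+t+\delta_{2,q}$, and set $$h(n,k,t)={n-t\brack k-t}-q^{(k-t+1)(k-t)}{n-k-1\brack k-t}+2.$$ Then $h(n,k,t)>\frac{47}{48}{k-t+1\brack 1}{n-t-1\brack k-t-1}$.
   Context: $q$ is a prime power and ${m\brack r}$ denotes the Gaussian binomial coefficient $\prod_{i=0}^{r-1}\frac{q^{m-i}-1}{q^{r-i}-1}$ (equal to $1$ for $r=0$). $\delta_{a,b}$ is the Kronecker delta. (The quantity $h(n,k,t)$ equals the size of the family $\{F\in{V\brack k}: E\subseteq F,\ \dim(F\cap U_2)\geq t\}\cup\{U_1,U_2\}$ for $U_1,U_2\in{V\brack k}$, $E\in{U_1\brack t}$ with $U_1\cap U_2\in{E\brack t-1}$, where $\dim V=n$.) *)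

theory Defs
  imports Complex_Main "HOL-Computational_Algebra.Primes"
begin

definition prime_power :: "nat \<Rightarrow> bool" where
  "prime_power q \<longleftrightarrow> (\<exists>p e. prime p \<and> e > 0 \<and> q = p ^ e)"

definition gauss_binom :: "nat \<Rightarrow> nat \<Rightarrow> nat \<Rightarrow> real" where
  "gauss_binom q m r = (\<Prod>i<r. (real q ^ (m - i) - 1) / (real q ^ (r - i) - 1))"

definition kdelta :: "nat \<Rightarrow> nat \<Rightarrow> nat" where
  "kdelta a b = (if a = b then 1 else 0)"

definition h_fun :: "nat \<Rightarrow> nat \<Rightarrow> nat \<Rightarrow> nat \<Rightarrow> real" where
  "h_fun q n k t = gauss_binom q (n - t) (k - t)
     - real q ^ ((k - t + 1) * (k - t)) * gauss_binom q (n - k - 1) (k - t) + 2"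

end

theory Submission
  imports Defs "HOL-Analysis.Infinite_Products"
begin

text \<open>Write \<open>s = k - t\<close> and \<open>N = n - t\<close>, so that \<open>h - 2 = [N,s] - q^((s+1)s) [N-s-1,s]\<close>.
  The \<open>q\<close>-Pascal rule telescopes this difference into \<open>\<Sum>w\<le>s. q^(ws) [N-1-w,s-1]\<close>.
  Comparing the factors of \<open>q^(ws) [N-1-w,s-1]\<close> with those of \<open>q^w [N-1,s-1]\<close>, the
  Weierstrass product inequality and a geometric bound on \<open>\<Sum>j. 1/(q^j - 1)\<close> give
  \<open>q^(ws) [N-1-w,s-1] \<ge> q^w [N-1,s-1] (1 - (q^w - 1) E)\<close> with
  \<open>E = q / ((q-1)(q^(N-s+1) - 1))\<close>. Summing over \<open>w\<close> yields \<open>[s+1,1] [N-1,s-1] (1 - \<epsilon>)\<close>,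
  and the hypothesis on \<open>n\<close> makes \<open>q^(N-s+1)\<close> large enough that \<open>\<epsilon> \<le> 1/48\<close>.\<close>

lemma prime_power_ge_2:
  assumes "prime_power q"
  shows "2 \<le> q"
proof -
  obtain p e where "prime p" "e > 0" "q = p ^ e"
    using assms unfolding prime_power_def by blast
  then show ?thesis
    using prime_ge_2_nat[of p] self_le_power[of p e] by simp
qed

lemma gauss_binom_pos:
  assumes "q \<ge> 2" "r \<le> m"
  shows "gauss_binom q m r > 0"
  unfolding gauss_binom_def
proof (intro prod_pos ballI)
  fix i assume "i \<in> {..<r}"
  then have "0 < m - i" "0 < r - i" using assms by auto
  moreover have "real q > 1" using assms by simp
  ultimately show "0 < (real q ^ (m - i) - 1) / (real q ^ (r - i) - 1)"
    by (simp add: one_less_power)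
qed

lemma gauss_binom_Suc_Suc:
  assumes "q \<ge> 2" "m < b"
  shows "gauss_binom q (Suc b) (Suc m)
           = real q ^ Suc m * gauss_binom q b (Suc m) + gauss_binom q b m"
proof -
  define x where "x = real q"
  define P where "P = (\<Prod>i<m. x ^ (b - i) - 1)"
  define D where "D = (\<Prod>i<m. x ^ (m - i) - 1)"
  have x1: "x > 1" using assms by (simp add: x_def)
  have D_pos: "D > 0" unfolding D_def
    by (intro prod_pos ballI) (use x1 in \<open>auto intro!: one_less_power\<close>)
  have nonzero: "x ^ Suc m - 1 \<noteq> 0"
    using one_less_power[OF x1, of "Suc m"] by simp
  have lhs: "gauss_binom q (Suc b) (Suc m) = (x ^ Suc b - 1) * P / ((x ^ Suc m - 1) * D)"
    unfolding gauss_binom_def P_def D_def x_def prod_dividef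
    by (simp only: prod.lessThan_Suc_shift) simp
  have denom: "(\<Prod>i<Suc m. x ^ (Suc m - i) - 1) = (x ^ Suc m - 1) * D"
    by (simp only: prod.lessThan_Suc_shift) (simp add: D_def)
  have numer: "(\<Prod>i<Suc m. x ^ (b - i) - 1) = P * (x ^ (b - m) - 1)"
    by (simp add: P_def)
  have upper: "gauss_binom q b (Suc m) = P * (x ^ (b - m) - 1) / ((x ^ Suc m - 1) * D)"
    unfolding gauss_binom_def x_def[symmetric] prod_dividef denom numer by simp
  have lower: "gauss_binom q b m = P / D"
    unfolding gauss_binom_def P_def D_def x_def prod_dividef by simp
  have "x ^ m * x ^ (b - m) = x ^ b"
    using assms by (simp add: power_add[symmetric])
  then show ?thesis
    unfolding lhs upper lower x_def[symmetric] using D_pos nonzero by (simp add: field_simps)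
qed

lemma gauss_binom_sub_power_eq_sum:
  assumes "q \<ge> 2" "u + r < N"
  shows "gauss_binom q N (Suc r) - real q ^ (u * Suc r) * gauss_binom q (N - u) (Suc r)
           = (\<Sum>w<u. real q ^ (w * Suc r) * gauss_binom q (N - Suc w) r)"
proof -
  define B where "B w = real q ^ (w * Suc r) * gauss_binom q (N - w) (Suc r)" for w
  have "B w - B (Suc w) = real q ^ (w * Suc r) * gauss_binom q (N - Suc w) r"
    if "w < u" for w
  proof -
    have "N - w = Suc (N - Suc w)" "r < N - Suc w" using that assms(2) by auto
    then show ?thesis
      unfolding B_def using gauss_binom_Suc_Suc[OF assms(1)] by (simp add: power_add algebra_simps)
  qed
  then have "(\<Sum>w<u. B w - B (Suc w))
               = (\<Sum>w<u. real q ^ (w * Suc r) * gauss_binom q (N - Suc w) r)"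
    by simp
  then show ?thesis
    unfolding sum_lessThan_telescope' by (simp add: B_def)
qed

lemma sum_inverse_power_minus_one_le:
  fixes x :: real
  assumes "x > 1" "r < N"
  shows "(\<Sum>i<r. 1 / (x ^ (N - 1 - i) - 1)) \<le> x / ((x - 1) * (x ^ (N - r) - 1))"
  using assms(2)
proof (induction r)
  case 0
  then show ?case using assms(1) by (simp add: one_less_power)
next
  case (Suc r)
  define Z where "Z = x ^ (N - Suc r)"
  have Z_ge: "Z \<ge> x"
    unfolding Z_def using Suc.prems assms(1) power_increasing[of 1 "N - Suc r" x] by simp
  have "x ^ (N - r) = x * Z"
    unfolding Z_def using Suc.prems by (simp add: Suc_diff_Suc[symmetric])
  then have IH: "(\<Sum>i<r. 1 / (x ^ (N - 1 - i) - 1)) \<le> x / ((x - 1) * (x * Z - 1))"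
    using Suc by simp
  have pos: "x - 1 > 0" "Z - 1 > 0" "x * Z - 1 > 0"
    using assms(1) Z_ge mult_strict_mono[of 1 x 1 Z] by auto
  have "x * (Z - 1) \<le> x * Z - 1"
    using assms(1) by (simp add: algebra_simps)
  then have "x / ((x - 1) * (x * Z - 1)) \<le> 1 / ((x - 1) * (Z - 1))"
    using pos by (simp add: divide_simps)
  moreover have "1 / ((x - 1) * (Z - 1)) + 1 / (Z - 1) = x / ((x - 1) * (Z - 1))"
    using pos by (simp add: divide_simps)
  moreover have "x ^ (N - 1 - r) = Z" unfolding Z_def by simp
  ultimately show ?case using IH by (simp add: Z_def)
qed

lemma gauss_binom_shift_ge:
  assumes "q \<ge> 2" "w + r < N"
  shows "real q ^ w * gauss_binom q (N - 1) r
           * (1 - (real q ^ w - 1) * (real q / ((real q - 1) * (real q ^ (N - r) - 1))))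
         \<le> real q ^ (w * Suc r) * gauss_binom q (N - Suc w) r"
proof -
  define x where "x = real q"
  define y where "y i = (x ^ w - 1) / (x ^ (N - 1 - i) - 1)" for i
  define F where "F i = (x ^ (N - 1 - i) - 1) / (x ^ (r - i) - 1)" for i
  have x2: "x \<ge> 2" using assms(1) by (simp add: x_def)
  have big: "x ^ (N - 1 - i) > 1" if "i < r" for i
    using that assms(2) x2 by (intro one_less_power) auto
  have factor: "x ^ w * ((x ^ (N - Suc w - i) - 1) / (x ^ (r - i) - 1)) = F i * (1 - y i)"
    if i: "i < r" for i
  proof -
    have "x ^ w * x ^ (N - Suc w - i) = x ^ (N - 1 - i)"
      using i assms(2) by (simp add: power_add[symmetric])
    moreover have "W * ((B - 1) / D) = (A - 1) / D * (1 - (W - 1) / (A - 1))"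
      if "W * B = A" "A > 1" for A B D W :: real
    proof -
      have "1 - (W - 1) / (A - 1) = (A - W) / (A - 1)" using that(2) by (simp add: field_simps)
      moreover have "W * ((B - 1) / D) = (A - W) / D"
        using that(1) by (simp add: algebra_simps diff_divide_distrib)
      ultimately show ?thesis using that(2) by simp
    qed
    ultimately show ?thesis
      using big[OF i] unfolding F_def y_def by blast
  qed
  have y_bounds: "y i \<in> {0..1}" if i: "i < r" for i
  proof -
    have "x ^ w \<le> x ^ (N - 1 - i)" using i assms(2) x2 by (intro power_increasing) auto
    moreover have "x ^ w \<ge> 1" using x2 by simp
    ultimately show ?thesis using big[OF i] unfolding y_def by (simp add: divide_simps)
  qed
  have "x ^ (w * Suc r) * gauss_binom q (N - Suc w) r
          = x ^ w * (\<Prod>i<r. x ^ w * ((x ^ (N - Suc w - i) - 1) / (x ^ (r - i) - 1)))"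
    unfolding gauss_binom_def x_def[symmetric] prod.distrib
    by (simp add: power_add power_mult)
  also have "\<dots> = x ^ w * (\<Prod>i<r. F i * (1 - y i))"
    using factor by simp
  also have "\<dots> = x ^ w * gauss_binom q (N - 1) r * (\<Prod>i<r. 1 - y i)"
    unfolding prod.distrib gauss_binom_def F_def x_def by simp
  finally have expand: "x ^ (w * Suc r) * gauss_binom q (N - Suc w) r
                          = x ^ w * gauss_binom q (N - 1) r * (\<Prod>i<r. 1 - y i)" .
  have "(\<Sum>i<r. y i) = (x ^ w - 1) * (\<Sum>i<r. 1 / (x ^ (N - 1 - i) - 1))"
    unfolding y_def sum_distrib_left by simp
  also have "\<dots> \<le> (x ^ w - 1) * (x / ((x - 1) * (x ^ (N - r) - 1)))"
    using x2 assms(2) by (intro mult_left_mono sum_inverse_power_minus_one_le) auto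
  finally have "1 - (x ^ w - 1) * (x / ((x - 1) * (x ^ (N - r) - 1))) \<le> (\<Prod>i<r. 1 - y i)"
    using Weierstrass_prod_ineq[of "{..<r}" y] y_bounds by fastforce
  moreover have "0 \<le> x ^ w * gauss_binom q (N - 1) r"
    using gauss_binom_pos[of q r "N - 1"] assms x2 by (simp add: less_imp_le)
  ultimately show ?thesis
    unfolding x_def[symmetric] expand by (intro mult_left_mono)
qed

lemma sum_power_mult_power_minus_one:
  fixes x :: real
  assumes "x\<^sup>2 \<noteq> 1"
  shows "(\<Sum>w<m. x ^ w * (x ^ w - 1)) = (x ^ m - 1) * (x ^ m - x) / (x\<^sup>2 - 1)"
proof (induction m)
  case (Suc m)
  have "x\<^sup>2 - 1 \<noteq> 0" using assms by simp
  then show ?case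
    using Suc by (simp add: field_simps power2_eq_square)
qed simp

lemma forty_eight_le_power_gap:
  fixes q a b :: nat
  assumes "q \<ge> 2" "a \<ge> 1" "a + 4 + kdelta 2 q \<le> b"
  shows "48 * real q * (real q ^ a - real q) \<le> (real q ^ b - 1) * ((real q)\<^sup>2 - 1)"
proof -
  define x where "x = real q"
  have X_ge: "x ^ a \<ge> x" using assms(1,2) by (simp add: x_def self_le_power)
  show ?thesis
  proof (cases "q = 2")
    case True
    then have "x ^ b \<ge> x ^ (a + 5)"
      using assms(3) by (intro power_increasing) (auto simp: x_def kdelta_def)
    then show ?thesis using True by (simp add: x_def power_add)
  next
    case False
    then have x3: "x \<ge> 3" using assms(1) by (simp add: x_def)
    have "x ^ 4 \<ge> 27 * x"
      using x3 power_mono[OF x3, of 3] by (simp add: power_numeral_reduce)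
    then have "27 * (x * x ^ a) \<le> x ^ 4 * x ^ a"
      using x3 by (simp add: mult_right_mono)
    also have "\<dots> \<le> x ^ b"
      using assms(3) x3 power_increasing[of "a + 4" b x] by (simp add: power_add mult.commute)
    finally have "x ^ b \<ge> 27 * (x * x ^ a)" .
    moreover have "x\<^sup>2 - 1 \<ge> 8" using x3 power_mono[OF x3, of 2] by simp
    moreover have xX: "x * x ^ a \<ge> 9" using X_ge x3 mult_mono[of 3 x 3 "x ^ a"] by simp
    ultimately have "(27 * (x * x ^ a) - 1) * 8 \<le> (x ^ b - 1) * (x\<^sup>2 - 1)"
      by (intro mult_mono) auto
    moreover have "48 * x * (x ^ a - x) \<le> 48 * (x * x ^ a)"
      by (simp add: algebra_simps)
    ultimately show ?thesis using xX unfolding x_def by argo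
  qed
qed

lemma gauss_binom_sub_power_ge:
  assumes "q \<ge> 2" "2 * r + 6 + kdelta 2 q \<le> N"
  shows "(47 / 48) * gauss_binom q (Suc (Suc r)) 1 * gauss_binom q (N - 1) r
           \<le> gauss_binom q N (Suc r)
              - real q ^ (Suc (Suc r) * Suc r) * gauss_binom q (N - Suc (Suc r)) (Suc r)"
    (is "_ \<le> ?D")
proof -
  define x where "x = real q"
  define G where "G = gauss_binom q (N - 1) r"
  define X where "X = x ^ Suc (Suc r)"
  define Y where "Y = x ^ (N - r)"
  define E where "E = x / ((x - 1) * (Y - 1))"
  define S where "S = (\<Sum>w<Suc (Suc r). x ^ w)"
  define T where "T = (\<Sum>w<Suc (Suc r). x ^ w * (x ^ w - 1))"
  have x2: "x \<ge> 2" using assms(1) by (simp add: x_def)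
  have N: "Suc (Suc r) + r < N" using assms(2) by simp
  have "G * (S - E * T) = (\<Sum>w<Suc (Suc r). x ^ w * G * (1 - (x ^ w - 1) * E))"
    unfolding S_def T_def sum_distrib_left sum_subtractf[symmetric]
    by (intro sum.cong) (simp_all add: algebra_simps)
  also have "\<dots> \<le> (\<Sum>w<Suc (Suc r). x ^ (w * Suc r) * gauss_binom q (N - Suc w) r)"
    unfolding x_def G_def E_def Y_def
    using assms(1) N by (intro sum_mono gauss_binom_shift_ge) auto
  also have "\<dots> = ?D"
    unfolding x_def using gauss_binom_sub_power_eq_sum[OF assms(1) N] by simp
  finally have lower: "G * (S - E * T) \<le> ?D" .
  have S_eq: "S = (X - 1) / (x - 1)"
    unfolding S_def X_def using x2 by (intro geometric_sum) auto
  have x_sq: "x\<^sup>2 - 1 > 0"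
    using x2 power_strict_mono[of 1 x 2] by simp
  then have "x\<^sup>2 \<noteq> 1" by simp
  have "E * T = S * (x * (X - x) / ((Y - 1) * (x\<^sup>2 - 1)))"
    unfolding E_def S_eq T_def sum_power_mult_power_minus_one[OF \<open>x\<^sup>2 \<noteq> 1\<close>]
    by (simp add: X_def field_simps)
  also have "\<dots> \<le> S * (1 / 48)"
  proof -
    have "48 * x * (X - x) \<le> (Y - 1) * (x\<^sup>2 - 1)"
      unfolding x_def X_def Y_def using assms by (intro forty_eight_le_power_gap) auto
    moreover have "Y - 1 > 0" unfolding Y_def using x2 N by (simp add: one_less_power)
    moreover have "S \<ge> 0" unfolding S_def using x2 by (simp add: sum_nonneg)
    ultimately show ?thesis using x_sq by (intro mult_left_mono) (simp_all add: divide_simps)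
  qed
  finally have "E * T \<le> S / 48" by simp
  moreover have "G > 0" unfolding G_def using gauss_binom_pos[OF assms(1)] N by simp
  ultimately have "G * (E * T) \<le> G * (S / 48)" by (intro mult_left_mono) auto
  then have "(47 / 48) * S * G \<le> G * (S - E * T)" by (simp add: algebra_simps)
  moreover have "gauss_binom q (Suc (Suc r)) 1 = S"
    unfolding S_eq gauss_binom_def X_def x_def by simp
  ultimately show ?thesis using lower unfolding G_def by simp
qed

theorem lemma2p6:
  fixes q n k t :: nat
  assumes "prime_power q"
    and "t \<ge> 2" and "k \<ge> t + 2"
    and "n \<ge> 2 * k + t + kdelta 2 q"
  shows "h_fun q n k t > (47 / 48) * gauss_binom q (k - t + 1) 1 * gauss_binom q (n - t - 1) (k - t - 1)"
proof -
  define r where "r = k - t - 1"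
  define N where "N = n - t"
  have q: "q \<ge> 2" using prime_power_ge_2[OF assms(1)] .
  have N: "2 * r + 6 + kdelta 2 q \<le> N" using assms(2-4) unfolding r_def N_def by simp
  have "k - t = Suc r" "k - t + 1 = Suc (Suc r)" "k - t - 1 = r"
    "n - k - 1 = N - Suc (Suc r)" "n - t - 1 = N - 1"
    using assms(3,4) unfolding r_def N_def by auto
  then show ?thesis
    using gauss_binom_sub_power_ge[OF q N] unfolding h_fun_def N_def[symmetric] by simp
qed

end
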